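(* Let $A=[0,1]\subseteq\mathbb R$ with the usual order, let $\neg x=\sqrt{1-x^2}$, and define a binary operation on $A$ by $x\cdot 1=x$ and $x\cdot y=\max(y-\neg x,\,0)$ for $y<1$. Then: (i) multiplication is monotone on the left: for all $x,y,z\in A$, $x\le y$ implies $z\cdot x\le z\cdot y$; (ii) for every $x\in(0,1)$, putting $y=1-\neg x$, there is no element $w\in A$ such that for all $z\in A$: $z\le w$ iff $x\cdot z\le y$. In particular, there is no binary operation $\backslash$ on $A$ with $x\cdot z\le y\iff z\le x\backslash y$ for all $x,y,z\in A$.
   Context: This is the multiplication $x\cdot y=\neg(\neg x\oplus\neg y)$ of the basic algebra on $[0,1]$ determined by the antitone involutions $\delta_1(x)=\sqrt{1-x^2}$ on $[0,1]$ and $\delta_a(x)=a-x$ on $[0,a]$ for $a<1$; the claim concerns only the explicit operation given. *)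

theory Defs
  imports Complex_Main
begin

definition A :: "real set" where "A = {0..1}"

definition negA :: "real \<Rightarrow> real" where "negA x = sqrt (1 - x^2)"

definition multA :: "real \<Rightarrow> real \<Rightarrow> real" where
  "multA x y = (if y = 1 then x else max (y - negA x) 0)"

end

theory Submission
  imports Defs
begin

text \<open>Since \<open>1 - x < \<not>x \<le> 1\<close> for \<open>0 < x < 1\<close>, the product \<open>x \<cdot> z\<close> is \<open>0\<close> for
  every \<open>z < 1\<close> but jumps to \<open>x > 1 - \<not>x\<close> at \<open>z = 1\<close>. Hence
  \<open>{z. x \<cdot> z \<le> 1 - \<not>x} = [0,1)\<close>, which has no greatest element, so the right
  residual of \<open>1 - \<not>x\<close> by \<open>x\<close> does not exist. Monotonicity follows from \<open>1 - z \<le> \<not>z\<close>, which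
  makes the jump at \<open>1\<close> upward.\<close>

lemma negA_nonneg:
  assumes "0 \<le> x" "x \<le> 1"
  shows "0 \<le> negA x"
  using assms by (simp add: negA_def power_le_one)

lemma negA_le_one: "negA x \<le> 1"
  by (simp add: negA_def)

lemma one_minus_le_negA:
  assumes "0 \<le> x" "x \<le> 1"
  shows "1 - x \<le> negA x"
proof -
  have "(1 - x)^2 \<le> 1 - x^2"
    using assms by (simp add: power2_eq_square algebra_simps mult_left_le)
  then have "sqrt ((1 - x)^2) \<le> sqrt (1 - x^2)"
    by (rule real_sqrt_le_mono)
  then show ?thesis
    using assms by (simp add: negA_def)
qed

lemma one_minus_less_negA:
  assumes "0 < x" "x < 1"
  shows "1 - x < negA x"
proof -
  have "(1 - x)^2 < 1 - x^2"
    using assms by (simp add: power2_eq_square algebra_simps mult_left_le)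
  then have "sqrt ((1 - x)^2) < sqrt (1 - x^2)"
    by (rule real_sqrt_less_mono)
  then show ?thesis
    using assms by (simp add: negA_def)
qed

lemma multA_mono:
  assumes "x \<in> A" "y \<in> A" "z \<in> A" "x \<le> y"
  shows "multA z x \<le> multA z y"
  using assms one_minus_le_negA[of z] by (auto simp: multA_def A_def)

lemma multA_le_one_minus_negA_iff:
  assumes "0 < x" "x < 1" "z \<in> A"
  shows "multA x z \<le> 1 - negA x \<longleftrightarrow> z < 1"
  using assms one_minus_less_negA[of x] negA_le_one[of x] by (auto simp: multA_def A_def)

lemma no_greatest_below_one: "\<not> (\<exists>w\<in>A. \<forall>z\<in>A. z \<le> w \<longleftrightarrow> z < 1)"
proof
  assume "\<exists>w\<in>A. \<forall>z\<in>A. z \<le> w \<longleftrightarrow> z < 1"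
  then obtain w where "w \<in> A" and w: "\<forall>z\<in>A. z \<le> w \<longleftrightarrow> z < 1"
    by blast
  show False
  proof (cases "w < 1")
    case True
    then have "(w + 1) / 2 \<in> A" "(w + 1) / 2 < 1" "\<not> (w + 1) / 2 \<le> w"
      using \<open>w \<in> A\<close> by (auto simp: A_def)
    then show False
      using w by blast
  next
    case False
    then show False
      using w by (force simp: A_def)
  qed
qed

lemma no_residual_of_one_minus_negA:
  assumes "0 < x" "x < 1"
  shows "\<not> (\<exists>w\<in>A. \<forall>z\<in>A. z \<le> w \<longleftrightarrow> multA x z \<le> 1 - negA x)"
  using no_greatest_below_one multA_le_one_minus_negA_iff[OF assms] by simp

theorem mainTheorem12:
  shows "(\<forall>x\<in>A. \<forall>y\<in>A. \<forall>z\<in>A. x \<le> y \<longrightarrow> multA z x \<le> multA z y)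
    \<and> (\<forall>x. 0 < x \<and> x < 1 \<longrightarrow>
          \<not> (\<exists>w\<in>A. \<forall>z\<in>A. (z \<le> w \<longleftrightarrow> multA x z \<le> 1 - negA x)))
    \<and> \<not> (\<exists>r :: real \<Rightarrow> real \<Rightarrow> real.
          (\<forall>x\<in>A. \<forall>y\<in>A. r x y \<in> A) \<and>
          (\<forall>x\<in>A. \<forall>y\<in>A. \<forall>z\<in>A. (multA x z \<le> y \<longleftrightarrow> z \<le> r x y)))"
proof (intro conjI)
  show "\<forall>x\<in>A. \<forall>y\<in>A. \<forall>z\<in>A. x \<le> y \<longrightarrow> multA z x \<le> multA z y"
    using multA_mono by blast
  show "\<forall>x. 0 < x \<and> x < 1 \<longrightarrow>
          \<not> (\<exists>w\<in>A. \<forall>z\<in>A. (z \<le> w \<longleftrightarrow> multA x z \<le> 1 - negA x))"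
    using no_residual_of_one_minus_negA by blast
  show "\<not> (\<exists>r :: real \<Rightarrow> real \<Rightarrow> real.
          (\<forall>x\<in>A. \<forall>y\<in>A. r x y \<in> A) \<and>
          (\<forall>x\<in>A. \<forall>y\<in>A. \<forall>z\<in>A. (multA x z \<le> y \<longleftrightarrow> z \<le> r x y)))"
  proof
    assume "\<exists>r :: real \<Rightarrow> real \<Rightarrow> real.
          (\<forall>x\<in>A. \<forall>y\<in>A. r x y \<in> A) \<and>
          (\<forall>x\<in>A. \<forall>y\<in>A. \<forall>z\<in>A. (multA x z \<le> y \<longleftrightarrow> z \<le> r x y))"
    then obtain r where r_closed: "\<forall>x\<in>A. \<forall>y\<in>A. r x y \<in> A"
      and r_residual: "\<forall>x\<in>A. \<forall>y\<in>A. \<forall>z\<in>A. (multA x z \<le> y \<longleftrightarrow> z \<le> r x y)"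
      by blast
    have "1/2 \<in> A" "1 - negA (1/2) \<in> A"
      using negA_nonneg[of "1/2"] negA_le_one[of "1/2"] by (auto simp: A_def)
    then have "\<exists>w\<in>A. \<forall>z\<in>A. z \<le> w \<longleftrightarrow> multA (1/2) z \<le> 1 - negA (1/2)"
      using r_closed r_residual by blast
    then show False
      using no_residual_of_one_minus_negA[of "1/2"] by simp
  qed
qed

end
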